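(* Let $A_S$ be a parabolic-retractable Artin group with Coxeter matrix $(m_{s,t})_{s,t\in S}$, and let $a,b,c\in S$ be pairwise distinct with $m_{a,b}$, $m_{a,c}$ and $m_{b,c}$ all odd. Then $m_{b,c}$ divides $m_{a,b}$ or $m_{a,c}$.
   Context: A Coxeter matrix over a finite set $S$ is a matrix $M=(m_{s,t})_{s,t\in S}$ with entries in $\mathbb{N}\cup\{\infty\}$, $m_{s,s}=1$, and $m_{s,t}=m_{t,s}\ge 2$ for $s\neq t$. Write $\Pi(s,t,m)$ for the alternating word $sts\cdots$ of length $m$. The Artin group is $A_S=\langle S\mid \Pi(s,t,m_{s,t})=\Pi(t,s,m_{s,t})$ for $s\neq t$, $m_{s,t}\neq\infty\rangle$. For $X\subseteq S$, $A_X$ is the subgroup generated by $X$. A retraction of $G$ onto a subgroup $H$ is a homomorphism $\varphi:G\to H$ with $\varphi|_H=\mathrm{id}_H$. $A_S$ is parabolic-retractable if it admits a retraction onto $A_X$ for every $X\subseteq S$. "Odd" means a finite odd integer. *)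

theory Defs
  imports "HOL-Algebra.Generated_Groups" "HOL-Library.Extended_Nat"
begin

definition coxeter_matrix :: "'a set \<Rightarrow> ('a \<Rightarrow> 'a \<Rightarrow> enat) \<Rightarrow> bool" where
  "coxeter_matrix S M \<longleftrightarrow> finite S \<and> (\<forall>s\<in>S. M s s = 1) \<and>
     (\<forall>s\<in>S. \<forall>t\<in>S. s \<noteq> t \<longrightarrow> M s t = M t s \<and> M s t \<ge> 2)"

text \<open>Letters: (s, True) is the generator s, (s, False) its inverse.\<close>
type_synonym 'a letter = "'a \<times> bool"

definition inv_letter :: "'a letter \<Rightarrow> 'a letter" where
  "inv_letter l = (fst l, \<not> snd l)"

definition alt_word :: "'a \<Rightarrow> 'a \<Rightarrow> nat \<Rightarrow> 'a letter list" where
  "alt_word s t m = map (\<lambda>i. (if even i then s else t, True)) [0..<m]"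

definition words :: "'a set \<Rightarrow> 'a letter list set" where
  "words S = {w. set (map fst w) \<subseteq> S}"

inductive artin_eq :: "'a set \<Rightarrow> ('a \<Rightarrow> 'a \<Rightarrow> enat) \<Rightarrow> 'a letter list \<Rightarrow> 'a letter list \<Rightarrow> bool"
  for S M where
  refl: "artin_eq S M w w"
| sym: "artin_eq S M u w \<Longrightarrow> artin_eq S M w u"
| trans: "artin_eq S M u v \<Longrightarrow> artin_eq S M v w \<Longrightarrow> artin_eq S M u w"
| cancel: "artin_eq S M (u @ [l, inv_letter l] @ v) (u @ v)"
| braid: "s \<in> S \<Longrightarrow> t \<in> S \<Longrightarrow> s \<noteq> t \<Longrightarrow> M s t = enat m \<Longrightarrow>
     artin_eq S M (u @ alt_word s t m @ v) (u @ alt_word t s m @ v)"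

definition artin_class :: "'a set \<Rightarrow> ('a \<Rightarrow> 'a \<Rightarrow> enat) \<Rightarrow> 'a letter list \<Rightarrow> 'a letter list set" where
  "artin_class S M w = {v \<in> words S. artin_eq S M w v}"

definition artin_group :: "'a set \<Rightarrow> ('a \<Rightarrow> 'a \<Rightarrow> enat) \<Rightarrow> 'a letter list set monoid" where
  "artin_group S M = \<lparr> carrier = artin_class S M ` words S,
     mult = (\<lambda>A B. artin_class S M ((SOME a. a \<in> A) @ (SOME b. b \<in> B))),
     one = artin_class S M [] \<rparr>"

definition artin_gen :: "'a set \<Rightarrow> ('a \<Rightarrow> 'a \<Rightarrow> enat) \<Rightarrow> 'a \<Rightarrow> 'a letter list set" where
  "artin_gen S M s = artin_class S M [(s, True)]"

definition parabolic :: "'a set \<Rightarrow> ('a \<Rightarrow> 'a \<Rightarrow> enat) \<Rightarrow> 'a set \<Rightarrow> 'a letter list set set" where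
  "parabolic S M X = generate (artin_group S M) (artin_gen S M ` X)"

definition is_retraction :: "('g, 'c) monoid_scheme \<Rightarrow> 'g set \<Rightarrow> ('g \<Rightarrow> 'g) \<Rightarrow> bool" where
  "is_retraction G H \<phi> \<longleftrightarrow> \<phi> \<in> hom G (G\<lparr>carrier := H\<rparr>) \<and> (\<forall>h\<in>H. \<phi> h = h)"

definition parabolic_retractable :: "'a set \<Rightarrow> ('a \<Rightarrow> 'a \<Rightarrow> enat) \<Rightarrow> bool" where
  "parabolic_retractable S M \<longleftrightarrow>
     (\<forall>X \<subseteq> S. \<exists>\<phi>. is_retraction (artin_group S M) (parabolic S M X) \<phi>)"

definition odd_entry :: "enat \<Rightarrow> bool" where
  "odd_entry e \<longleftrightarrow> (\<exists>m. e = enat m \<and> odd m)"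

end

theory Submission
  imports Defs "HOL-Algebra.Bij" "HOL-Analysis.Complex_Transcendental"
begin

text \<open>Let \<open>m = M b c\<close>, suppose \<open>m\<close> divides neither \<open>M a b\<close> nor \<open>M a c\<close>, and put
  \<open>\<zeta> = exp (2\<pi>i/m)\<close>, \<open>l = -\<zeta>\<close>. For suitable coefficients \<open>K s u\<close>, depending only on \<open>M s u\<close>
  and \<open>m\<close>, the pseudo-reflections \<open>\<sigma>\<^sub>s\<close> of \<open>\<complex>\<^sup>S\<close>, which replace \<open>v s\<close> by
  \<open>l v s + (\<Sum>u\<noteq>s. K s u v u)\<close>, satisfy all braid relations of \<open>A\<^sub>S\<close>: on the coordinates
  \<open>s, t\<close> this amounts to the \<open>n\<close>-th power of a \<open>2\<times>2\<close> companion matrix being scalar.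
  Since \<open>K b c = K c b = 1 - l\<close>, the image of \<open>A\<^sub>b\<^sub>c\<close> preserves the plane spanned by
  \<open>e\<^sub>b\<close> and \<open>e\<^sub>b + e\<^sub>c\<close> and acts on it by lower triangular matrices with parameters
  \<open>(\<mu>, t)\<close>: \<open>\<sigma>\<^sub>b\<close> by \<open>(l, 0)\<close> and \<open>\<sigma>\<^sub>c\<close> by \<open>(l, 1 - l)\<close>. A retraction \<open>\<phi>\<close> onto
  \<open>A\<^sub>b\<^sub>c\<close> carries the braid relations of \<open>a\<close> with \<open>b\<close> and with \<open>c\<close> to odd braid
  relations between the parameters \<open>(\<mu>, t)\<close> of \<open>\<phi> a\<close> and \<open>(l, 0)\<close>, resp. \<open>(l, 1 - l)\<close>.
  Because \<open>(\<Sum>i<n. \<zeta>\<^sup>i) \<noteq> 0\<close> when \<open>m\<close> does not divide \<open>n\<close>, such a relation forces equal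
  parameters, so \<open>t = 0\<close> and \<open>t = 1 - l\<close>, contradicting \<open>l \<noteq> 1\<close>.\<close>

section \<open>Artin groups\<close>

lemma artin_eq_context:
  "artin_eq S M u v \<Longrightarrow> artin_eq S M (x @ u @ y) (x @ v @ y)"
proof (induction rule: artin_eq.induct)
  case (cancel u l v)
  show ?case using artin_eq.cancel[of S M "x @ u" l "v @ y"] by simp
next
  case (braid s t m u v)
  show ?case using artin_eq.braid[of s S t M m "x @ u" "v @ y"] braid.hyps by simp
qed (auto intro: artin_eq.intros)

lemma artin_eq_append:
  assumes "artin_eq S M u u'" "artin_eq S M v v'"
  shows "artin_eq S M (u @ v) (u' @ v')"
  using artin_eq_context[OF assms(1), of "[]" v] artin_eq_context[OF assms(2), of u' "[]"]
  by (auto intro: artin_eq.trans)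

lemma artin_class_eq: "artin_eq S M u v \<Longrightarrow> artin_class S M u = artin_class S M v"
  unfolding artin_class_def by (blast intro: artin_eq.trans artin_eq.sym)

lemma words_append [simp]: "u @ v \<in> words S \<longleftrightarrow> u \<in> words S \<and> v \<in> words S"
  by (auto simp: words_def)

lemma words_Nil [simp]: "[] \<in> words S"
  by (simp add: words_def)

lemma some_in_artin_class:
  assumes "w \<in> words S"
  obtains v where "(SOME v. v \<in> artin_class S M w) = v" "v \<in> words S" "artin_eq S M w v"
proof -
  have "w \<in> artin_class S M w"
    using assms by (simp add: artin_class_def artin_eq.refl)
  then have "(SOME v. v \<in> artin_class S M w) \<in> artin_class S M w"
    by (rule someI)
  then show thesis using that unfolding artin_class_def by blast
qed

lemma carrier_artin_group: "carrier (artin_group S M) = artin_class S M ` words S"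
  by (simp add: artin_group_def)

lemma one_artin_group: "\<one>\<^bsub>artin_group S M\<^esub> = artin_class S M []"
  by (simp add: artin_group_def)

lemma mult_artin_class:
  assumes "u \<in> words S" "v \<in> words S"
  shows "artin_class S M u \<otimes>\<^bsub>artin_group S M\<^esub> artin_class S M v = artin_class S M (u @ v)"
proof -
  obtain u' v' where "(SOME x. x \<in> artin_class S M u) = u'" "artin_eq S M u u'"
    and "(SOME x. x \<in> artin_class S M v) = v'" "artin_eq S M v v'"
    using some_in_artin_class assms by metis
  then show ?thesis
    by (simp add: artin_group_def artin_class_eq[OF artin_eq_append] artin_eq.sym)
qed

definition inv_word :: "'a letter list \<Rightarrow> 'a letter list" where
  "inv_word w = rev (map inv_letter w)"

lemma inv_word_words: "w \<in> words S \<Longrightarrow> inv_word w \<in> words S"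
  by (auto simp: words_def inv_word_def inv_letter_def)

lemma inv_word_cancel: "artin_eq S M (inv_word w @ w) []"
proof (induction w)
  case Nil
  then show ?case by (simp add: inv_word_def artin_eq.refl)
next
  case (Cons x w)
  have "inv_word (x # w) @ x # w = inv_word w @ [inv_letter x, inv_letter (inv_letter x)] @ w"
    by (simp add: inv_word_def inv_letter_def)
  then show ?case
    using artin_eq.cancel Cons.IH by (metis artin_eq.trans)
qed

lemma group_artin_group: "group (artin_group S M)"
proof (rule groupI)
  fix x
  assume "x \<in> carrier (artin_group S M)"
  then obtain w where w: "w \<in> words S" "x = artin_class S M w"
    by (auto simp: carrier_artin_group)
  then have "artin_class S M (inv_word w) \<otimes>\<^bsub>artin_group S M\<^esub> x = \<one>\<^bsub>artin_group S M\<^esub>"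
    by (simp add: mult_artin_class inv_word_words one_artin_group artin_class_eq inv_word_cancel)
  moreover have "artin_class S M (inv_word w) \<in> carrier (artin_group S M)"
    using w by (simp add: carrier_artin_group inv_word_words)
  ultimately show "\<exists>y\<in>carrier (artin_group S M). y \<otimes>\<^bsub>artin_group S M\<^esub> x = \<one>\<^bsub>artin_group S M\<^esub>"
    by blast
qed (auto simp: carrier_artin_group one_artin_group mult_artin_class)

fun alt_prod :: "('c, 'd) monoid_scheme \<Rightarrow> 'c \<Rightarrow> 'c \<Rightarrow> nat \<Rightarrow> 'c" where
  "alt_prod G x y 0 = \<one>\<^bsub>G\<^esub>"
| "alt_prod G x y (Suc k) = x \<otimes>\<^bsub>G\<^esub> alt_prod G y x k"

lemma alt_prod_closed:
  "monoid G \<Longrightarrow> x \<in> carrier G \<Longrightarrow> y \<in> carrier G \<Longrightarrow> alt_prod G x y k \<in> carrier G"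
  by (induction k arbitrary: x y) (simp_all add: monoid.m_closed monoid.one_closed)

lemma alt_prod_carrier_update [simp]: "alt_prod (G\<lparr>carrier := H\<rparr>) x y k = alt_prod G x y k"
  by (induction k arbitrary: x y) simp_all

lemma hom_alt_prod:
  assumes "h \<in> hom G H" "group G" "group H" "x \<in> carrier G" "y \<in> carrier G"
  shows "h (alt_prod G x y k) = alt_prod H (h x) (h y) k"
  using assms(4,5)
proof (induction k arbitrary: x y)
  case 0
  then show ?case using hom_one[OF assms(1-3)] by simp
next
  case (Suc k)
  then show ?case
    using hom_mult[OF assms(1)] alt_prod_closed[OF group.is_monoid[OF assms(2)]] by simp
qed

lemma alt_word_0 [simp]: "alt_word s t 0 = []"
  by (simp add: alt_word_def)

lemma alt_word_Suc [simp]: "alt_word s t (Suc k) = (s, True) # alt_word t s k"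
  by (simp only: alt_word_def map_upt_Suc) simp

lemma alt_word_words: "s \<in> S \<Longrightarrow> t \<in> S \<Longrightarrow> alt_word s t k \<in> words S"
  by (auto simp: words_def alt_word_def)

lemma alt_prod_artin_gen:
  assumes "s \<in> S" "t \<in> S"
  shows "alt_prod (artin_group S M) (artin_gen S M s) (artin_gen S M t) k
       = artin_class S M (alt_word s t k)"
  using assms
proof (induction k arbitrary: s t)
  case 0
  then show ?case by (simp add: one_artin_group)
next
  case (Suc k)
  have "[(s, True)] \<in> words S" "alt_word t s k \<in> words S"
    using Suc.prems by (simp add: words_def, simp add: alt_word_words)
  then show ?case
    using Suc by (simp add: artin_gen_def mult_artin_class)
qed

lemma artin_gen_braid:
  assumes "s \<in> S" "t \<in> S" "s \<noteq> t" "M s t = enat m"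
  shows "alt_prod (artin_group S M) (artin_gen S M s) (artin_gen S M t) m
       = alt_prod (artin_group S M) (artin_gen S M t) (artin_gen S M s) m"
  using artin_eq.braid[of s S t M m "[]" "[]"] assms
  by (simp add: alt_prod_artin_gen artin_class_eq)

lemma artin_gen_carrier: "s \<in> S \<Longrightarrow> artin_gen S M s \<in> carrier (artin_group S M)"
  by (simp add: artin_gen_def carrier_artin_group words_def)

section \<open>Homomorphisms out of an Artin group\<close>

definition satisfies_braids ::
    "'a set \<Rightarrow> ('a \<Rightarrow> 'a \<Rightarrow> enat) \<Rightarrow> ('c, 'd) monoid_scheme \<Rightarrow> ('a \<Rightarrow> 'c) \<Rightarrow> bool" where
  "satisfies_braids S M G g \<longleftrightarrow> (\<forall>s\<in>S. \<forall>t\<in>S. \<forall>m. s \<noteq> t \<longrightarrow> M s t = enat m \<longrightarrow>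
     alt_prod G (g s) (g t) m = alt_prod G (g t) (g s) m)"

definition letter_val :: "('c, 'd) monoid_scheme \<Rightarrow> ('a \<Rightarrow> 'c) \<Rightarrow> 'a letter \<Rightarrow> 'c" where
  "letter_val G g x = (if snd x then g (fst x) else inv\<^bsub>G\<^esub> g (fst x))"

definition word_val :: "('c, 'd) monoid_scheme \<Rightarrow> ('a \<Rightarrow> 'c) \<Rightarrow> 'a letter list \<Rightarrow> 'c" where
  "word_val G g w = foldr (\<lambda>x y. letter_val G g x \<otimes>\<^bsub>G\<^esub> y) w \<one>\<^bsub>G\<^esub>"

lemma word_val_Nil [simp]: "word_val G g [] = \<one>\<^bsub>G\<^esub>"
  by (simp add: word_val_def)

lemma word_val_Cons [simp]: "word_val G g (x # w) = letter_val G g x \<otimes>\<^bsub>G\<^esub> word_val G g w"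
  by (simp add: word_val_def)

definition artin_lift ::
    "('c, 'd) monoid_scheme \<Rightarrow> ('a \<Rightarrow> 'c) \<Rightarrow> 'a letter list set \<Rightarrow> 'c" where
  "artin_lift G g A = word_val G g (SOME w. w \<in> A)"

context
  fixes G (structure) and g :: "'a \<Rightarrow> 'c"
  assumes G: "group G" and g: "range g \<subseteq> carrier G"
begin

interpretation group G by (rule G)

lemma generator_image_closed [simp]: "g s \<in> carrier G"
  using g by blast

lemma letter_val_closed [simp]: "letter_val G g x \<in> carrier G"
  by (simp add: letter_val_def)

lemma word_val_closed [simp]: "word_val G g w \<in> carrier G"
  by (induction w) simp_all

lemma word_val_append: "word_val G g (u @ v) = word_val G g u \<otimes> word_val G g v"
  by (induction u) (simp_all add: m_assoc)

lemma word_val_alt_word: "word_val G g (alt_word s t k) = alt_prod G (g s) (g t) k"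
  by (induction k arbitrary: s t) (simp_all add: letter_val_def)

lemma word_val_artin_eq:
  assumes "satisfies_braids S M G g" "artin_eq S M u v"
  shows "word_val G g u = word_val G g v"
  using assms(2)
proof (induction rule: artin_eq.induct)
  case (cancel u x v)
  have "letter_val G g x \<otimes> letter_val G g (inv_letter x) = \<one>"
    by (simp add: letter_val_def inv_letter_def)
  then show ?case
    by (simp add: word_val_append flip: m_assoc)
next
  case (braid s t m u v)
  then have "alt_prod G (g s) (g t) m = alt_prod G (g t) (g s) m"
    using assms(1) braid.hyps unfolding satisfies_braids_def by blast
  then show ?case
    by (simp add: word_val_append word_val_alt_word)
qed simp_all

lemma artin_lift_class:
  "satisfies_braids S M G g \<Longrightarrow> w \<in> words S \<Longrightarrow> artin_lift G g (artin_class S M w) = word_val G g w"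
  by (metis some_in_artin_class artin_lift_def word_val_artin_eq)

lemma artin_lift_gen:
  "satisfies_braids S M G g \<Longrightarrow> s \<in> S \<Longrightarrow> artin_lift G g (artin_gen S M s) = g s"
  by (simp add: artin_gen_def artin_lift_class words_def letter_val_def)

lemma artin_lift_hom:
  "satisfies_braids S M G g \<Longrightarrow> artin_lift G g \<in> hom (artin_group S M) G"
  by (rule homI) (auto simp: carrier_artin_group mult_artin_class artin_lift_class word_val_append)

end

section \<open>Alternating compositions\<close>

fun alt_comp :: "('b \<Rightarrow> 'b) \<Rightarrow> ('b \<Rightarrow> 'b) \<Rightarrow> nat \<Rightarrow> 'b \<Rightarrow> 'b" where
  "alt_comp f g 0 = id"
| "alt_comp f g (Suc k) = f \<circ> alt_comp g f k"

lemma alt_comp_semiconj: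
  assumes "\<And>x. h (f x) = f' (h x)" "\<And>x. h (g x) = g' (h x)"
  shows "h (alt_comp f g k x) = alt_comp f' g' k (h x)"
  using assms by (induction k arbitrary: f g f' g' x) simp_all

lemma alt_comp_braid_semiconj:
  assumes "surj h" "\<And>x. h (f x) = f' (h x)" "\<And>x. h (g x) = g' (h x)"
    and "alt_comp f g n = alt_comp g f n"
  shows "alt_comp f' g' n = alt_comp g' f' n"
proof
  fix y
  obtain x where "y = h x" using assms(1) by blast
  then show "alt_comp f' g' n y = alt_comp g' f' n y"
    using alt_comp_semiconj[of h f f' g g' n x] alt_comp_semiconj[of h g g' f f' n x] assms(2-4)
    by metis
qed

lemma funpow_semiconj: "(\<And>x. h (f x) = g (h x)) \<Longrightarrow> h ((f ^^ k) x) = (g ^^ k) (h x)"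
  by (induction k) simp_all

text \<open>If \<open>\<tau>\<close> swaps \<open>f\<close> and \<open>g\<close>, then \<open>alt_comp f g k \<circ> \<tau>^k = (f \<circ> \<tau>)^k\<close> and
  \<open>alt_comp g f k \<circ> \<tau>^k = (g \<circ> \<tau>)^k = \<tau> \<circ> (f \<circ> \<tau>)^k \<circ> \<tau>\<^sup>-\<^sup>1\<close>; so the braid relation
  of length \<open>n\<close> amounts to \<open>(f \<circ> \<tau>)^n\<close> commuting with \<open>\<tau>\<close>.\<close>
lemma alt_comp_braid_by_swap:
  assumes swap: "\<And>x. \<tau> (f x) = g (\<tau> x)" "\<And>x. \<tau> (g x) = f (\<tau> x)" and "surj \<tau>"
    and comm: "\<And>x. ((f \<circ> \<tau>) ^^ n) (\<tau> x) = \<tau> (((f \<circ> \<tau>) ^^ n) x)"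
  shows "alt_comp f g n = alt_comp g f n"
proof -
  have unfold: "alt_comp f g k ((\<tau> ^^ k) x) = ((f \<circ> \<tau>) ^^ k) x"
    if "\<And>x. \<tau> (f x) = g (\<tau> x)" "\<And>x. \<tau> (g x) = f (\<tau> x)" for f g k x
    using that
  proof (induction k arbitrary: f g x)
    case (Suc k)
    have "alt_comp f g (Suc k) ((\<tau> ^^ Suc k) x) = f (alt_comp g f k ((\<tau> ^^ k) (\<tau> x)))"
      by (simp add: funpow_swap1)
    also have "alt_comp g f k ((\<tau> ^^ k) (\<tau> x)) = ((g \<circ> \<tau>) ^^ k) (\<tau> x)"
      using Suc by blast
    also have "\<dots> = \<tau> (((f \<circ> \<tau>) ^^ k) x)"
      by (rule funpow_semiconj[symmetric]) (simp add: Suc.prems)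
    finally show ?case by (simp add: comp_def)
  qed simp
  have "((g \<circ> \<tau>) ^^ n) (\<tau> x) = ((f \<circ> \<tau>) ^^ n) (\<tau> x)" for x
    using funpow_semiconj[of \<tau> "f \<circ> \<tau>" "g \<circ> \<tau>" n x] swap(1) comm by simp
  then have "(g \<circ> \<tau>) ^^ n = (f \<circ> \<tau>) ^^ n"
    using \<open>surj \<tau>\<close> by (metis surjD ext)
  then have "alt_comp f g n ((\<tau> ^^ n) x) = alt_comp g f n ((\<tau> ^^ n) x)" for x
    using unfold[of f g, OF swap] unfold[of g f, OF swap(2,1)] by simp
  moreover have "surj (\<tau> ^^ n)"
    using \<open>surj \<tau>\<close> by (simp add: surj_iff_all)
  ultimately show ?thesis
    by (metis surjD ext)
qed

lemma Bij_UNIV [simp]: "f \<in> Bij UNIV \<longleftrightarrow> bij f"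
  by (simp add: Bij_def)

lemma carrier_BijGroup_UNIV [simp]: "f \<in> carrier (BijGroup UNIV) \<longleftrightarrow> bij f"
  by (simp add: BijGroup_def)

lemma mult_BijGroup_UNIV [simp]: "bij f \<Longrightarrow> bij g \<Longrightarrow> f \<otimes>\<^bsub>BijGroup UNIV\<^esub> g = f \<circ> g"
  by (simp add: BijGroup_def compose_def comp_def restrict_UNIV)

lemma one_BijGroup_UNIV [simp]: "\<one>\<^bsub>BijGroup UNIV\<^esub> = id"
  by (simp add: BijGroup_def id_def restrict_UNIV)

lemma bij_alt_comp: "bij f \<Longrightarrow> bij g \<Longrightarrow> bij (alt_comp f g k)"
  by (induction k arbitrary: f g) (simp_all add: bij_comp)

lemma alt_prod_BijGroup: "bij f \<Longrightarrow> bij g \<Longrightarrow> alt_prod (BijGroup UNIV) f g k = alt_comp f g k"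
  by (induction k arbitrary: f g) (simp_all add: bij_alt_comp)

section \<open>Braid relations for affine maps of the plane\<close>

definition refl2_fst :: "complex \<Rightarrow> complex \<Rightarrow> complex \<Rightarrow> complex \<times> complex \<Rightarrow> complex \<times> complex" where
  "refl2_fst l x a = (\<lambda>(p, q). (l * p + x * q + a, q))"

definition refl2_snd :: "complex \<Rightarrow> complex \<Rightarrow> complex \<Rightarrow> complex \<times> complex \<Rightarrow> complex \<times> complex" where
  "refl2_snd l x a = (\<lambda>(p, q). (p, l * q + x * p + a))"

definition companion_map :: "complex \<Rightarrow> complex \<Rightarrow> complex \<times> complex \<Rightarrow> complex \<times> complex" where
  "companion_map x l = (\<lambda>(p, q). (x * p + l * q, p))"

lemma companion_map_eigen:
  assumes "\<mu>1 + \<mu>2 = x" "\<mu>1 * \<mu>2 = - l"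
  shows "(companion_map x l ^^ k) (c1 * \<mu>1 + c2 * \<mu>2, c1 + c2)
       = (c1 * \<mu>1 ^ (k + 1) + c2 * \<mu>2 ^ (k + 1), c1 * \<mu>1 ^ k + c2 * \<mu>2 ^ k)"
proof (induction k)
  case (Suc k)
  have l: "l = - (\<mu>1 * \<mu>2)"
    using assms(2) by simp
  have "x * (c1 * \<mu>1 ^ (k + 1) + c2 * \<mu>2 ^ (k + 1)) + l * (c1 * \<mu>1 ^ k + c2 * \<mu>2 ^ k)
      = c1 * \<mu>1 ^ (k + 2) + c2 * \<mu>2 ^ (k + 2)"
    unfolding assms(1)[symmetric] l
    by (simp add: power_Suc algebra_simps)
  with Suc show ?case by (simp add: companion_map_def)
qed simp

lemma companion_map_power_scalar:
  assumes "\<mu>1 + \<mu>2 = x" "\<mu>1 * \<mu>2 = - l" "\<mu>1 \<noteq> \<mu>2" "\<mu>1 ^ n = \<mu>2 ^ n"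
  shows "(companion_map x l ^^ n) z = (\<mu>1 ^ n * fst z, \<mu>1 ^ n * snd z)"
proof -
  obtain p q where z: "z = (p, q)" by fastforce
  define c1 where "c1 = (p - \<mu>2 * q) / (\<mu>1 - \<mu>2)"
  define c2 where "c2 = (\<mu>1 * q - p) / (\<mu>1 - \<mu>2)"
  have c: "c1 * (\<mu>1 - \<mu>2) = p - \<mu>2 * q" "c2 * (\<mu>1 - \<mu>2) = \<mu>1 * q - p"
    using assms(3) by (simp_all add: c1_def c2_def)
  have "(c1 * \<mu>1 + c2 * \<mu>2) * (\<mu>1 - \<mu>2) = c1 * (\<mu>1 - \<mu>2) * \<mu>1 + c2 * (\<mu>1 - \<mu>2) * \<mu>2"
    "(c1 + c2) * (\<mu>1 - \<mu>2) = c1 * (\<mu>1 - \<mu>2) + c2 * (\<mu>1 - \<mu>2)"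
    by (simp_all add: algebra_simps)
  then have "(c1 * \<mu>1 + c2 * \<mu>2) * (\<mu>1 - \<mu>2) = p * (\<mu>1 - \<mu>2)"
    "(c1 + c2) * (\<mu>1 - \<mu>2) = q * (\<mu>1 - \<mu>2)"
    unfolding c by (simp_all add: algebra_simps)
  then have "z = (c1 * \<mu>1 + c2 * \<mu>2, c1 + c2)"
    using assms(3) by (simp add: z)
  then show ?thesis
    using companion_map_eigen[OF assms(1,2), of n c1 c2] assms(4)
    by (simp add: algebra_simps)
qed

lemma companion_map_power_even:
  "(companion_map 0 l ^^ (2 * j)) z = (l ^ j * fst z, l ^ j * snd z)"
  by (induction j) (auto simp: companion_map_def algebra_simps split: prod.splits)

lemma refl2_braid_equal_constants:
  assumes scalar: "\<And>z. (companion_map x l ^^ n) z = (\<mu> * fst z, \<mu> * snd z)"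
  shows "alt_comp (refl2_fst l x c) (refl2_snd l x c) n = alt_comp (refl2_snd l x c) (refl2_fst l x c) n"
proof (rule alt_comp_braid_by_swap[where \<tau> = prod.swap])
  define X where "X = refl2_fst l x c \<circ> prod.swap"
  have X: "X z = companion_map x l z + (c, 0)" for z
    by (cases z) (simp add: X_def refl2_fst_def companion_map_def algebra_simps)
  have linear: "companion_map x l (u + v) = companion_map x l u + companion_map x l v" for u v
    by (cases u, cases v) (simp add: companion_map_def algebra_simps)
  have affine: "(X ^^ k) z = (companion_map x l ^^ k) z + (X ^^ k) 0" for k z
    by (induction k) (simp_all add: X linear add.assoc)
  define D where "D = (X ^^ n) 0"
  have Xn: "(X ^^ n) z = (\<mu> * fst z, \<mu> * snd z) + D" for z
    unfolding D_def by (subst affine) (simp add: scalar)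
  txt \<open>The second coordinate of \<open>X\<close> is the first coordinate of its argument,
    so \<open>X D = (X ^^ n) (X 0)\<close> forces the translation part \<open>D\<close> onto the diagonal.\<close>
  have "X ((X ^^ n) 0) = (X ^^ n) (X 0)"
    by (rule funpow_swap1)
  then have "fst D = snd D"
    by (simp add: X Xn companion_map_def split_beta prod_eq_iff flip: D_def)
  then show "(X ^^ n) (prod.swap z) = prod.swap ((X ^^ n) z)" for z
    by (simp add: Xn prod_eq_iff)
qed (simp_all add: refl2_fst_def refl2_snd_def split_beta)

lemma refl2_braid:
  assumes "x \<noteq> l - 1" and scalar: "\<And>z. (companion_map x l ^^ n) z = (\<mu> * fst z, \<mu> * snd z)"
  shows "alt_comp (refl2_fst l x a1) (refl2_snd l x a2) n = alt_comp (refl2_snd l x a2) (refl2_fst l x a1) n"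
proof -
  txt \<open>Translating by \<open>(\<delta>, 0)\<close> turns both constants into \<open>c\<close>.\<close>
  define \<delta> where "\<delta> = (a2 - a1) / (l - 1 - x)"
  define c where "c = (l - 1) * \<delta> + a1"
  have "(l - 1 - x) * \<delta> = a2 - a1"
    using assms(1) by (simp add: \<delta>_def)
  then have \<delta>: "x * \<delta> + a2 = c"
    by (simp add: c_def algebra_simps)
  define h where "h z = z + (\<delta>, 0)" for z :: "complex \<times> complex"
  have "surj h"
    by (rule surjI[of _ "\<lambda>z. z - (\<delta>, 0)"]) (simp add: h_def)
  moreover have "h (refl2_fst l x c z) = refl2_fst l x a1 (h z)" for z
    by (cases z) (simp add: h_def refl2_fst_def c_def algebra_simps)
  moreover have "h (refl2_snd l x c z) = refl2_snd l x a2 (h z)" for z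
    using \<delta> by (cases z) (simp add: h_def refl2_snd_def algebra_simps)
  ultimately show ?thesis
    by (rule alt_comp_braid_semiconj) (rule refl2_braid_equal_constants[OF scalar])
qed

section \<open>A representation by pseudo-reflections\<close>

definition pseudo_refl ::
    "'a set \<Rightarrow> ('a \<Rightarrow> 'a \<Rightarrow> complex) \<Rightarrow> complex \<Rightarrow> 'a \<Rightarrow> ('a \<Rightarrow> complex) \<Rightarrow> 'a \<Rightarrow> complex" where
  "pseudo_refl S K l s v = v(s := l * v s + (\<Sum>u\<in>S-{s}. K s u * v u))"

lemma sum_update_outside: "(\<Sum>u\<in>S-{s}. K s u * (v(s := y)) u) = (\<Sum>u\<in>S-{s}. K s u * v u)"
  by (rule sum.cong) auto

lemma bij_pseudo_refl:
  assumes "l \<noteq> 0"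
  shows "bij (pseudo_refl S K l s)"
proof (rule o_bij)
  let ?g = "\<lambda>v. v(s := (v s - (\<Sum>u\<in>S-{s}. K s u * v u)) / l)"
  show "?g \<circ> pseudo_refl S K l s = id" "pseudo_refl S K l s \<circ> ?g = id"
    using assms by (simp_all add: pseudo_refl_def sum_update_outside fun_eq_iff)
qed

lemma pseudo_refl_update_pair:
  assumes "finite S" "s \<in> S" "t \<in> S" "s \<noteq> t"
  shows "pseudo_refl S K l s (v(s := p, t := q))
       = (\<lambda>(p', q'). v(s := p', t := q')) (refl2_fst l (K s t) (\<Sum>u\<in>S-{s,t}. K s u * v u) (p, q))"
proof -
  have "(\<Sum>u\<in>S-{s}. K s u * (v(s := p, t := q)) u)
      = K s t * q + (\<Sum>u\<in>S-{s}-{t}. K s u * (v(s := p, t := q)) u)"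
    using assms by (subst sum.remove[of _ t]) auto
  also have "(\<Sum>u\<in>S-{s}-{t}. K s u * (v(s := p, t := q)) u) = (\<Sum>u\<in>S-{s,t}. K s u * v u)"
    by (rule sum.cong) auto
  finally have sum: "(\<Sum>u\<in>S-{s}. K s u * (v(s := p, t := q)) u) = K s t * q + (\<Sum>u\<in>S-{s,t}. K s u * v u)" .
  show ?thesis
    unfolding pseudo_refl_def sum
    using assms(4) by (simp add: refl2_fst_def fun_upd_twist add.assoc)
qed

lemma pseudo_refl_braid_of_refl2:
  assumes "finite S" "s \<in> S" "t \<in> S" "s \<noteq> t" "K t s = K s t"
    and refl2: "\<And>a1 a2. alt_comp (refl2_fst l (K s t) a1) (refl2_snd l (K s t) a2) n
                       = alt_comp (refl2_snd l (K s t) a2) (refl2_fst l (K s t) a1) n"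
  shows "alt_comp (pseudo_refl S K l s) (pseudo_refl S K l t) n
       = alt_comp (pseudo_refl S K l t) (pseudo_refl S K l s) n"
proof
  fix v :: "'a \<Rightarrow> complex"
  define h where "h = (\<lambda>(p, q). v(s := p, t := q))"
  define a1 where "a1 = (\<Sum>u\<in>S-{s,t}. K s u * v u)"
  define a2 where "a2 = (\<Sum>u\<in>S-{s,t}. K t u * v u)"
  have s: "h (refl2_fst l (K s t) a1 z) = pseudo_refl S K l s (h z)" for z
    using pseudo_refl_update_pair[OF assms(1-4)] by (simp add: h_def a1_def split_beta)
  have t: "h (refl2_snd l (K s t) a2 z) = pseudo_refl S K l t (h z)" for z
    using pseudo_refl_update_pair[OF assms(1,3,2) assms(4)[symmetric]] assms(4,5)
    by (simp add: h_def a2_def split_beta fun_upd_twist insert_commute refl2_fst_def refl2_snd_def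
        algebra_simps)
  have v: "h (v s, v t) = v"
    by (simp add: h_def)
  have "alt_comp (pseudo_refl S K l s) (pseudo_refl S K l t) n v
      = h (alt_comp (refl2_fst l (K s t) a1) (refl2_snd l (K s t) a2) n (v s, v t))"
    using alt_comp_semiconj[of h _ "pseudo_refl S K l s" _ "pseudo_refl S K l t", OF s t] v by simp
  also have "\<dots> = h (alt_comp (refl2_snd l (K s t) a2) (refl2_fst l (K s t) a1) n (v s, v t))"
    by (simp add: refl2)
  also have "\<dots> = alt_comp (pseudo_refl S K l t) (pseudo_refl S K l s) n v"
    using alt_comp_semiconj[of h _ "pseudo_refl S K l t" _ "pseudo_refl S K l s", OF t s] v by simp
  finally show "alt_comp (pseudo_refl S K l s) (pseudo_refl S K l t) n v
      = alt_comp (pseudo_refl S K l t) (pseudo_refl S K l s) n v" .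
qed

definition unit_root :: "nat \<Rightarrow> complex" where
  "unit_root n = exp (2 * of_real pi * \<i> / of_nat n)"

lemma unit_root_pow_eq_1_iff: "1 \<le> n \<Longrightarrow> unit_root n ^ k = 1 \<longleftrightarrow> n dvd k"
  unfolding unit_root_def exp_of_nat_mult[symmetric]
  using complex_root_unity_eq_1[of n k] by (simp add: field_simps)

lemma unit_root_nonzero [simp]: "unit_root n \<noteq> 0"
  by (simp add: unit_root_def)

lemma unit_root_ne_1: "2 \<le> n \<Longrightarrow> unit_root n \<noteq> 1"
  using unit_root_pow_eq_1_iff[of n 1] by auto

lemma unit_root_ne_minus_1: "3 \<le> n \<Longrightarrow> unit_root n \<noteq> -1"
  using unit_root_pow_eq_1_iff[of n 2] by (auto dest: dvd_imp_le)

lemma root_quotient_trace_ne: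
  fixes \<zeta> \<eta> \<mu> :: complex
  assumes "\<mu> * \<mu> * \<eta> = \<zeta>" "\<eta> ^ n = 1" "\<zeta> ^ n \<noteq> 1"
  shows "\<mu> + \<mu> * \<eta> \<noteq> - \<zeta> - 1"
proof
  assume trace: "\<mu> + \<mu> * \<eta> = - \<zeta> - 1"
  have "\<mu> * (1 + \<eta>) = \<mu> + \<mu> * \<eta>"
    by (simp add: algebra_simps)
  also have "\<dots> = - (\<zeta> + 1)"
    using trace by simp
  finally have "(\<mu> * (1 + \<eta>)) ^ 2 = (\<zeta> + 1) ^ 2"
    by (metis power2_minus)
  moreover have "\<eta> * (\<mu> * (1 + \<eta>)) ^ 2 = (\<mu> * \<mu> * \<eta>) * (1 + \<eta>) ^ 2"
    by (simp add: power2_eq_square algebra_simps)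
  ultimately have "\<zeta> * (1 + \<eta>) ^ 2 = \<eta> * (\<zeta> + 1) ^ 2"
    using assms(1) by simp
  moreover have "(\<zeta> * \<eta> - 1) * (\<zeta> - \<eta>) = \<eta> * (\<zeta> + 1) ^ 2 - \<zeta> * (1 + \<eta>) ^ 2"
    by (simp add: power2_eq_square algebra_simps)
  ultimately have "\<zeta> * \<eta> = 1 \<or> \<zeta> = \<eta>"
    by simp
  then have "\<zeta> ^ n = 1"
  proof
    assume "\<zeta> * \<eta> = 1"
    then have "\<zeta> ^ n * \<eta> ^ n = 1"
      by (metis power_mult_distrib power_one)
    with assms(2) show ?thesis by simp
  qed (use assms(2) in simp)
  with assms(3) show False ..
qed

lemma companion_map_root_quotient_power:
  fixes \<zeta> \<eta> \<mu> :: complex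
  assumes "\<mu> * \<mu> * \<eta> = \<zeta>" "\<zeta> \<noteq> 0" "\<eta> \<noteq> 1" "\<eta> ^ n = 1"
  shows "(companion_map (\<mu> + \<mu> * \<eta>) (- \<zeta>) ^^ n) z = (\<mu> ^ n * fst z, \<mu> ^ n * snd z)"
proof (rule companion_map_power_scalar)
  show "\<mu> * (\<mu> * \<eta>) = - (- \<zeta>)"
    using assms(1) by (simp add: mult.assoc)
  have "\<mu> \<noteq> 0"
    using assms(1,2) by auto
  with assms(3,4) show "\<mu> \<noteq> \<mu> * \<eta>" "\<mu> ^ n = (\<mu> * \<eta>) ^ n"
    by (simp_all add: power_mult_distrib)
qed simp

text \<open>For odd \<open>M s t = n\<close> the coupling is the trace of a companion matrix whose eigenvalues
  have product \<open>\<zeta> = unit_root m\<close> and equal \<open>n\<close>-th powers: \<open>1\<close> and \<open>\<zeta>\<close> if \<open>m\<close> divides \<open>n\<close>,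
  otherwise \<open>\<mu>\<close> and \<open>\<mu>\<eta>\<close> with \<open>\<eta> = unit_root n\<close> and \<open>\<mu>\<^sup>2\<eta> = \<zeta>\<close>.\<close>
definition coupling :: "('a \<Rightarrow> 'a \<Rightarrow> enat) \<Rightarrow> nat \<Rightarrow> 'a \<Rightarrow> 'a \<Rightarrow> complex" where
  "coupling M m s t = (case M s t of
      enat n \<Rightarrow> if even n then 0 else if m dvd n then 1 + unit_root m
                else csqrt (unit_root m / unit_root n) * (1 + unit_root n)
    | \<infinity> \<Rightarrow> 0)"

lemma coupling_companion_power_scalar:
  assumes "3 \<le> m" "2 \<le> n" "M s t = enat n"
  defines "\<zeta> \<equiv> unit_root m"
  shows "\<exists>\<mu>. coupling M m s t \<noteq> - \<zeta> - 1 \<and>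
      (\<forall>z. (companion_map (coupling M m s t) (- \<zeta>) ^^ n) z = (\<mu> * fst z, \<mu> * snd z))"
proof -
  have \<zeta>: "\<zeta> \<noteq> 0" "\<zeta> \<noteq> 1" "\<zeta> \<noteq> -1" "\<zeta> ^ k = 1 \<longleftrightarrow> m dvd k" for k
    using assms(1) unit_root_ne_1 unit_root_ne_minus_1 unit_root_pow_eq_1_iff by (auto simp: \<zeta>_def)
  consider (even) "even n" | (dvd) "odd n" "m dvd n" | (other) "odd n" "\<not> m dvd n"
    by blast
  then show ?thesis
  proof cases
    case even
    then obtain j where "n = 2 * j" ..
    moreover have "0 \<noteq> - \<zeta> - 1"
      using \<zeta>(3) by (auto simp: minus_equation_iff)
    ultimately show ?thesis
      using even assms(3) companion_map_power_even[where l = "- \<zeta>"]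
      by (intro exI[of _ "(- \<zeta>) ^ j"]) (simp add: coupling_def)
  next
    case dvd
    have "1 + \<zeta> \<noteq> - \<zeta> - 1"
    proof
      assume "1 + \<zeta> = - \<zeta> - 1"
      then have "2 * (\<zeta> + 1) = 0"
        by (simp add: algebra_simps)
      with \<zeta>(3) show False
        by (metis mult_eq_0_iff zero_neq_numeral eq_neg_iff_add_eq_0)
    qed
    then show ?thesis
      using dvd assms(3) \<zeta> companion_map_power_scalar[of 1 \<zeta> "1 + \<zeta>" "- \<zeta>" n]
      by (intro exI[of _ 1]) (simp add: coupling_def \<zeta>_def)
  next
    case other
    define \<eta> where "\<eta> = unit_root n"
    define \<mu> where "\<mu> = csqrt (\<zeta> / \<eta>)"
    have \<eta>: "\<eta> \<noteq> 0" "\<eta> \<noteq> 1" "\<eta> ^ n = 1"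
      using assms(2) unit_root_ne_1 unit_root_pow_eq_1_iff[of n n] by (auto simp: \<eta>_def)
    then have \<mu>: "\<mu> * \<mu> * \<eta> = \<zeta>"
      using power2_csqrt[of "\<zeta> / \<eta>"] by (simp add: \<mu>_def power2_eq_square)
    have "\<mu> + \<mu> * \<eta> \<noteq> - \<zeta> - 1"
      by (rule root_quotient_trace_ne[OF \<mu> \<eta>(3)]) (use \<zeta>(4) other in simp)
    moreover have "(companion_map (\<mu> + \<mu> * \<eta>) (- \<zeta>) ^^ n) z = (\<mu> ^ n * fst z, \<mu> ^ n * snd z)" for z
      by (rule companion_map_root_quotient_power[OF \<mu> \<zeta>(1) \<eta>(2,3)])
    moreover have "coupling M m s t = \<mu> + \<mu> * \<eta>"
      using other assms(3) by (simp add: coupling_def \<mu>_def \<eta>_def \<zeta>_def algebra_simps)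
    ultimately show ?thesis
      by auto
  qed
qed

lemma coupling_refl2_braid:
  assumes "3 \<le> m" "2 \<le> n" "M s t = enat n"
  defines "l \<equiv> - unit_root m" and "x \<equiv> coupling M m s t"
  shows "alt_comp (refl2_fst l x a1) (refl2_snd l x a2) n
       = alt_comp (refl2_snd l x a2) (refl2_fst l x a1) n"
proof -
  obtain \<mu> where "coupling M m s t \<noteq> - unit_root m - 1"
    "\<And>z. (companion_map (coupling M m s t) (- unit_root m) ^^ n) z = (\<mu> * fst z, \<mu> * snd z)"
    using coupling_companion_power_scalar[of m n M s t, OF assms(1-3)] by blast
  then show ?thesis
    unfolding l_def x_def by (rule refl2_braid)
qed

lemma pseudo_refl_satisfies_braids:
  assumes "coxeter_matrix S M" "3 \<le> m"
  shows "satisfies_braids S M (BijGroup UNIV) (pseudo_refl S (coupling M m) (- unit_root m))"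
  unfolding satisfies_braids_def
proof (intro ballI allI impI)
  let ?\<sigma> = "pseudo_refl S (coupling M m) (- unit_root m)"
  fix s t n
  assume st: "s \<in> S" "t \<in> S" "s \<noteq> t" and n: "M s t = enat n"
  have "finite S" "M t s = M s t" "2 \<le> M s t"
    using assms(1) st by (auto simp: coxeter_matrix_def)
  moreover from this n have "2 \<le> n"
    by (simp add: numeral_eq_enat)
  ultimately have "alt_comp (?\<sigma> s) (?\<sigma> t) n = alt_comp (?\<sigma> t) (?\<sigma> s) n"
    using st n by (intro pseudo_refl_braid_of_refl2 coupling_refl2_braid assms(2)) (simp_all add: coupling_def)
  then show "alt_prod (BijGroup UNIV) (?\<sigma> s) (?\<sigma> t) n = alt_prod (BijGroup UNIV) (?\<sigma> t) (?\<sigma> s) n"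
    by (simp add: alt_prod_BijGroup bij_pseudo_refl)
qed

section \<open>A triangular action of the dihedral parabolic subgroup\<close>

text \<open>\<open>plane_vec b c (\<mu>, \<tau>) = \<mu> e\<^sub>b + \<tau> (e\<^sub>b + e\<^sub>c)\<close>.  When \<open>K b c = K c b = 1 - l\<close>
  the vector \<open>e\<^sub>b + e\<^sub>c\<close> is fixed by the pseudo-reflections at \<open>b\<close> and \<open>c\<close>, so both
  preserve this plane and act on it by lower triangular matrices.\<close>
definition plane_vec :: "'a \<Rightarrow> 'a \<Rightarrow> complex \<times> complex \<Rightarrow> 'a \<Rightarrow> complex" where
  "plane_vec b c z = (\<lambda>u. if u = b then fst z + snd z else if u = c then snd z else 0)"

definition triangular_map :: "complex \<Rightarrow> complex \<Rightarrow> complex \<times> complex \<Rightarrow> complex \<times> complex" where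
  "triangular_map m t = (\<lambda>(\<mu>, \<tau>). (m * \<mu>, t * \<mu> + \<tau>))"

definition acts_on_plane ::
    "'a \<Rightarrow> 'a \<Rightarrow> (('a \<Rightarrow> complex) \<Rightarrow> 'a \<Rightarrow> complex) \<Rightarrow> complex \<Rightarrow> complex \<Rightarrow> bool" where
  "acts_on_plane b c f m t \<longleftrightarrow> (\<forall>z. f (plane_vec b c z) = plane_vec b c (triangular_map m t z))"

lemma inj_plane_vec: "b \<noteq> c \<Longrightarrow> inj (plane_vec b c)"
  by (rule injI) (metis (no_types) plane_vec_def add_right_cancel prod_eq_iff)

lemma acts_on_plane_id: "acts_on_plane b c id 1 0"
  by (simp add: acts_on_plane_def triangular_map_def split_beta)

lemma acts_on_plane_comp:
  "acts_on_plane b c f m t \<Longrightarrow> acts_on_plane b c g m' t' \<Longrightarrow> acts_on_plane b c (f \<circ> g) (m * m') (t * m' + t')"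
  by (simp add: acts_on_plane_def triangular_map_def split_beta algebra_simps)

lemma acts_on_plane_inverse:
  assumes "acts_on_plane b c f m t" "m \<noteq> 0" "\<And>v. f' (f v) = v"
  shows "acts_on_plane b c f' (1 / m) (- t / m)"
  unfolding acts_on_plane_def
proof
  fix z
  have "triangular_map m t (triangular_map (1 / m) (- t / m) z) = z"
    using assms(2) by (simp add: triangular_map_def split_beta field_simps)
  then show "f' (plane_vec b c z) = plane_vec b c (triangular_map (1 / m) (- t / m) z)"
    using assms(1,3) unfolding acts_on_plane_def by metis
qed

lemma sum_plane_vec:
  assumes "finite S" "s \<in> S" "r \<in> S" "s \<noteq> r" "{s, r} = {b, c}"
  shows "(\<Sum>u\<in>S-{s}. K s u * plane_vec b c z u) = K s r * plane_vec b c z r"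
proof -
  have "(\<Sum>u\<in>S-{s}. K s u * plane_vec b c z u)
      = K s r * plane_vec b c z r + (\<Sum>u\<in>S-{s}-{r}. K s u * plane_vec b c z u)"
    using assms by (subst sum.remove[of _ r]) auto
  also have "(\<Sum>u\<in>S-{s}-{r}. K s u * plane_vec b c z u) = 0"
    using assms(5) by (intro sum.neutral) (auto simp: plane_vec_def doubleton_eq_iff)
  finally show ?thesis by simp
qed

lemma pseudo_refl_acts_on_plane_fst:
  assumes "finite S" "b \<in> S" "c \<in> S" "b \<noteq> c" "K b c = 1 - l"
  shows "acts_on_plane b c (pseudo_refl S K l b) l 0"
  using assms(4) sum_plane_vec[OF assms(1-4), of b c K]
  by (auto simp: acts_on_plane_def pseudo_refl_def plane_vec_def triangular_map_def fun_eq_iff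
      split_beta algebra_simps assms(5))

lemma pseudo_refl_acts_on_plane_snd:
  assumes "finite S" "b \<in> S" "c \<in> S" "b \<noteq> c" "K c b = 1 - l"
  shows "acts_on_plane b c (pseudo_refl S K l c) l (1 - l)"
  using assms(4) sum_plane_vec[OF assms(1,3,2) assms(4)[symmetric], of b c K]
  by (auto simp: acts_on_plane_def pseudo_refl_def plane_vec_def triangular_map_def fun_eq_iff
      split_beta algebra_simps insert_commute assms(5))

lemma alt_comp_triangular_fst_odd:
  "fst (alt_comp (triangular_map m t) (triangular_map m' t') (2 * j + 1) z) = m ^ (j + 1) * m' ^ j * fst z"
  by (induction j) (simp_all add: triangular_map_def split_beta)

lemma alt_comp_triangular_fst:
  "fst (alt_comp (triangular_map m t) (triangular_map m t') k z) = m ^ k * fst z"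
  by (induction k arbitrary: t t') (simp_all add: triangular_map_def split_beta)

lemma alt_comp_triangular_snd_diff:
  "snd (alt_comp (triangular_map m t) (triangular_map m t') k z)
     - snd (alt_comp (triangular_map m t') (triangular_map m t) k z)
   = (t - t') * fst z * ((- 1) ^ (k + 1) * (\<Sum>i<k. (- m) ^ i))"
proof (induction k arbitrary: t t')
  case (Suc k)
  define A where "A = alt_comp (triangular_map m t') (triangular_map m t) k z"
  define B where "B = alt_comp (triangular_map m t) (triangular_map m t') k z"
  have "(- 1) ^ k * (- m) ^ k = m ^ k"
    by (simp flip: power_mult_distrib)
  then have sum: "m ^ k - (- 1) ^ (k + 1) * (\<Sum>i<k. (- m) ^ i) = (- 1) ^ (Suc k + 1) * (\<Sum>i<Suc k. (- m) ^ i)"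
    by (simp add: algebra_simps)
  have "snd (alt_comp (triangular_map m t) (triangular_map m t') (Suc k) z)
      - snd (alt_comp (triangular_map m t') (triangular_map m t) (Suc k) z)
      = (t * fst A + snd A) - (t' * fst B + snd B)"
    by (simp add: A_def B_def triangular_map_def split_beta)
  also have "\<dots> = (t - t') * fst z * m ^ k + (snd A - snd B)"
    by (simp add: A_def B_def alt_comp_triangular_fst algebra_simps)
  also have "snd A - snd B = (t' - t) * fst z * ((- 1) ^ (k + 1) * (\<Sum>i<k. (- m) ^ i))"
    unfolding A_def B_def by (rule Suc.IH)
  finally show ?case
    unfolding sum[symmetric] by (simp add: algebra_simps)
qed simp

lemma triangular_braid_odd:
  assumes braid: "alt_comp (triangular_map m t) (triangular_map m' t') n
                = alt_comp (triangular_map m' t') (triangular_map m t) n"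
    and "odd n" "m \<noteq> 0" "m' \<noteq> 0" "(\<Sum>i<n. (- m') ^ i) \<noteq> 0"
  shows "t = t'"
proof -
  obtain j where n: "n = 2 * j + 1"
    using \<open>odd n\<close> by (metis oddE)
  have "fst (alt_comp (triangular_map m t) (triangular_map m' t') n (1, 0))
      = fst (alt_comp (triangular_map m' t') (triangular_map m t) n (1, 0))"
    by (simp only: braid)
  then have "m ^ (j + 1) * m' ^ j = m' ^ (j + 1) * m ^ j"
    unfolding n alt_comp_triangular_fst_odd by simp
  then have "m = m'"
    using assms(3,4) by (simp add: algebra_simps)
  then have "(t - t') * ((- 1) ^ (n + 1) * (\<Sum>i<n. (- m') ^ i)) = 0"
    using braid alt_comp_triangular_snd_diff[of m' t t' n "(1, 0)"] by simp
  then show ?thesis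
    using assms(5) by simp
qed

section \<open>Retractions\<close>

lemma retraction_alt_prod_braid:
  assumes "group G" "subgroup H G" "is_retraction G H \<phi>"
    and "x \<in> carrier G" "y \<in> H" "alt_prod G x y n = alt_prod G y x n"
  shows "alt_prod G (\<phi> x) y n = alt_prod G y (\<phi> x) n"
proof -
  have hom: "\<phi> \<in> hom G (G\<lparr>carrier := H\<rparr>)" and y_fixed: "\<phi> y = y"
    using assms(3,5) by (auto simp: is_retraction_def)
  have grp: "group (G\<lparr>carrier := H\<rparr>)"
    using group.subgroup_imp_group[OF assms(1,2)] .
  have y: "y \<in> carrier G"
    using subgroup.subset[OF assms(2)] assms(5) by blast
  have "\<phi> (alt_prod G x y n) = \<phi> (alt_prod G y x n)"
    using assms(6) by simp
  then show ?thesis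
    using hom_alt_prod[OF hom assms(1) grp assms(4) y] hom_alt_prod[OF hom assms(1) grp y assms(4)] y_fixed
    by simp
qed

lemma retraction_mem: "is_retraction G H \<phi> \<Longrightarrow> x \<in> carrier G \<Longrightarrow> \<phi> x \<in> H"
  by (auto simp: is_retraction_def hom_def Pi_def)

lemma subgroup_parabolic: "X \<subseteq> S \<Longrightarrow> subgroup (parabolic S M X) (artin_group S M)"
  unfolding parabolic_def
  by (rule group.generate_is_subgroup[OF group_artin_group]) (auto intro!: artin_gen_carrier)

lemma lift_retraction_braid:
  fixes g :: "'a \<Rightarrow> 'b \<Rightarrow> 'b"
  assumes braids: "satisfies_braids S M (BijGroup UNIV) g" and bij: "\<And>s. bij (g s)"
    and ret: "is_retraction (artin_group S M) (parabolic S M X) \<phi>"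
    and "X \<subseteq> S" "a \<in> S" "s \<in> X" "a \<noteq> s" "M a s = enat n"
  defines "T \<equiv> artin_lift (BijGroup UNIV) g (\<phi> (artin_gen S M a))"
  shows "alt_comp T (g s) n = alt_comp (g s) T n"
proof -
  let ?A = "artin_group S M" and ?B = "BijGroup (UNIV :: 'b set)"
  have s: "s \<in> S"
    using assms(4,6) by blast
  have range: "range g \<subseteq> carrier ?B"
    unfolding image_subset_iff using bij by simp
  have hom: "artin_lift ?B g \<in> hom ?A ?B"
    using artin_lift_hom[OF group_BijGroup range braids] .
  have sub: "subgroup (parabolic S M X) ?A"
    using subgroup_parabolic[OF assms(4)] .
  have "\<phi> (artin_gen S M a) \<in> parabolic S M X"
    using retraction_mem[OF ret artin_gen_carrier[OF assms(5)]] .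
  then have a: "\<phi> (artin_gen S M a) \<in> carrier ?A"
    using subgroup.subset[OF sub] by blast
  have gen_s: "artin_gen S M s \<in> parabolic S M X"
    unfolding parabolic_def using assms(6) by (blast intro: generate.incl)
  have braid: "alt_prod ?A (\<phi> (artin_gen S M a)) (artin_gen S M s) n
      = alt_prod ?A (artin_gen S M s) (\<phi> (artin_gen S M a)) n"
    using artin_gen_braid[of a S s M n, OF assms(5) s assms(7,8)]
    by (rule retraction_alt_prod_braid[OF group_artin_group sub ret artin_gen_carrier[OF assms(5)] gen_s])
  have lift_s: "artin_lift ?B g (artin_gen S M s) = g s"
    by (rule artin_lift_gen[OF group_BijGroup range braids s])
  have "alt_prod ?B T (g s) n = artin_lift ?B g (alt_prod ?A (\<phi> (artin_gen S M a)) (artin_gen S M s) n)"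
    by (simp add: hom_alt_prod[OF hom group_artin_group group_BijGroup a artin_gen_carrier[OF s]] lift_s T_def)
  also have "\<dots> = alt_prod ?B (g s) T n"
    by (simp add: braid hom_alt_prod[OF hom group_artin_group group_BijGroup artin_gen_carrier[OF s] a]
        lift_s T_def)
  finally have "alt_prod ?B T (g s) n = alt_prod ?B (g s) T n" .
  moreover have "bij T"
    using hom a by (auto simp: T_def hom_def Pi_def)
  ultimately show ?thesis
    by (simp add: alt_prod_BijGroup bij)
qed

lemma generate_acts_on_plane:
  assumes "group G" "\<rho> \<in> hom G (BijGroup UNIV)" "X \<subseteq> carrier G"
    and gens: "\<And>x. x \<in> X \<Longrightarrow> \<exists>m t. m \<noteq> 0 \<and> acts_on_plane b c (\<rho> x) m t"
    and "h \<in> generate G X"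
  shows "\<exists>m t. m \<noteq> 0 \<and> acts_on_plane b c (\<rho> h) m t"
proof -
  interpret group_hom G "BijGroup UNIV" \<rho>
    using assms(1,2) group_BijGroup by (simp add: group_hom_def group_hom_axioms_def)
  have bij: "bij (\<rho> x)" if "x \<in> carrier G" for x
    using hom_closed[OF that] by simp
  show ?thesis
    using assms(5)
  proof (induction rule: generate.induct)
    case one
    have "\<rho> \<one>\<^bsub>G\<^esub> = id"
      by simp
    then have "acts_on_plane b c (\<rho> \<one>\<^bsub>G\<^esub>) 1 0"
      by (simp only: acts_on_plane_id)
    then show ?case
      using one_neq_zero by blast
  next
    case (inv x)
    then have x: "x \<in> carrier G"
      using assms(3) by blast
    obtain m t where m: "m \<noteq> 0" and acts: "acts_on_plane b c (\<rho> x) m t"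
      using gens inv by blast
    have "inv_into UNIV (\<rho> x) (\<rho> x v) = v" for v
      using bij[OF x] by (simp add: bij_is_inj)
    then have "acts_on_plane b c (inv_into UNIV (\<rho> x)) (1 / m) (- t / m)"
      by (rule acts_on_plane_inverse[OF acts m])
    moreover have "\<rho> (inv\<^bsub>G\<^esub> x) = inv_into UNIV (\<rho> x)"
      using x bij[OF x] by (simp add: inv_BijGroup restrict_UNIV)
    ultimately show ?case
      using m by (rule_tac exI[of _ "1 / m"], rule_tac exI[of _ "- t / m"]) simp
  next
    case (eng x y)
    obtain m t m' t' where "m \<noteq> 0" "acts_on_plane b c (\<rho> x) m t"
      and "m' \<noteq> 0" "acts_on_plane b c (\<rho> y) m' t'"
      using eng.IH by blast
    then have "m * m' \<noteq> 0" "acts_on_plane b c (\<rho> x \<circ> \<rho> y) (m * m') (t * m' + t')"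
      by (simp_all add: acts_on_plane_comp)
    moreover have "x \<in> carrier G" "y \<in> carrier G"
      using eng.hyps group.generate_in_carrier[OF assms(1,3)] by blast+
    then have "\<rho> (x \<otimes>\<^bsub>G\<^esub> y) = \<rho> x \<circ> \<rho> y"
      using bij by simp
    ultimately have "m * m' \<noteq> 0 \<and> acts_on_plane b c (\<rho> (x \<otimes>\<^bsub>G\<^esub> y)) (m * m') (t * m' + t')"
      by (simp only: not_False_eq_True simp_thms)
    then show ?case
      by blast
  qed (use gens in blast)
qed

lemma acts_on_plane_braid_translation:
  assumes "b \<noteq> c" "acts_on_plane b c f m t" "acts_on_plane b c g m' t'"
    and "alt_comp f g n = alt_comp g f n" "odd n" "m \<noteq> 0" "m' \<noteq> 0" "(\<Sum>i<n. (- m') ^ i) \<noteq> 0"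
  shows "t = t'"
proof (rule triangular_braid_odd[OF _ assms(5-8)])
  have f: "plane_vec b c (triangular_map m t z) = f (plane_vec b c z)"
    and g: "plane_vec b c (triangular_map m' t' z) = g (plane_vec b c z)" for z
    using assms(2,3) unfolding acts_on_plane_def by metis+
  have "plane_vec b c (alt_comp (triangular_map m t) (triangular_map m' t') n z)
      = plane_vec b c (alt_comp (triangular_map m' t') (triangular_map m t) n z)" for z
    using alt_comp_semiconj[of "plane_vec b c" "triangular_map m t" f "triangular_map m' t'" g, OF f g]
      alt_comp_semiconj[of "plane_vec b c" "triangular_map m' t'" g "triangular_map m t" f, OF g f]
      assms(4) by simp
  then have "alt_comp (triangular_map m t) (triangular_map m' t') n z
      = alt_comp (triangular_map m' t') (triangular_map m t) n z" for z
    by (rule injD[OF inj_plane_vec[OF assms(1)]])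
  then show "alt_comp (triangular_map m t) (triangular_map m' t') n
      = alt_comp (triangular_map m' t') (triangular_map m t) n"
    by (rule ext)
qed

lemma retraction_image_acts_on_plane:
  fixes g :: "'a \<Rightarrow> ('c \<Rightarrow> complex) \<Rightarrow> 'c \<Rightarrow> complex"
  assumes braids: "satisfies_braids S M (BijGroup UNIV) g" and bij: "\<And>s. bij (g s)"
    and ret: "is_retraction (artin_group S M) (parabolic S M X) \<phi>" and "X \<subseteq> S" "a \<in> S"
    and gens: "\<And>s. s \<in> X \<Longrightarrow> \<exists>m t. m \<noteq> 0 \<and> acts_on_plane b c (g s) m t"
  shows "\<exists>m t. m \<noteq> 0 \<and> acts_on_plane b c (artin_lift (BijGroup UNIV) g (\<phi> (artin_gen S M a))) m t"
proof (rule generate_acts_on_plane[OF group_artin_group])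
  have range: "range g \<subseteq> carrier (BijGroup UNIV)"
    unfolding image_subset_iff using bij by simp
  show "artin_lift (BijGroup UNIV) g \<in> hom (artin_group S M) (BijGroup UNIV)"
    using artin_lift_hom[OF group_BijGroup range braids] .
  show "artin_gen S M ` X \<subseteq> carrier (artin_group S M)"
    using assms(4) by (auto intro!: artin_gen_carrier)
  show "\<exists>m t. m \<noteq> 0 \<and> acts_on_plane b c (artin_lift (BijGroup UNIV) g x) m t"
    if "x \<in> artin_gen S M ` X" for x
    using that assms(4) gens artin_lift_gen[OF group_BijGroup range braids] by auto
  show "\<phi> (artin_gen S M a) \<in> generate (artin_group S M) (artin_gen S M ` X)"
    using retraction_mem[OF ret artin_gen_carrier[OF assms(5)]] by (simp add: parabolic_def)
qed

lemma unit_root_geometric_sum_nonzero: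
  assumes "1 \<le> m" "\<not> m dvd n"
  shows "(\<Sum>i<n. unit_root m ^ i) \<noteq> 0"
proof
  assume "(\<Sum>i<n. unit_root m ^ i) = 0"
  then have "unit_root m ^ n = 1"
    using one_diff_power_eq[of "unit_root m" n] by simp
  with assms show False
    using unit_root_pow_eq_1_iff by blast
qed

lemma pseudo_refl_acts_on_plane_pair:
  assumes "coxeter_matrix S M" "b \<in> S" "c \<in> S" "b \<noteq> c" "M b c = enat m" "odd m"
  defines "\<sigma> \<equiv> pseudo_refl S (coupling M m) (- unit_root m)"
  shows "acts_on_plane b c (\<sigma> b) (- unit_root m) 0"
    and "acts_on_plane b c (\<sigma> c) (- unit_root m) (1 + unit_root m)"
proof -
  have "finite S" "M c b = M b c"
    using assms(1-4) by (auto simp: coxeter_matrix_def)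
  then have K: "coupling M m b c = 1 - - unit_root m" "coupling M m c b = 1 - - unit_root m"
    using assms(5,6) by (simp_all add: coupling_def)
  show "acts_on_plane b c (\<sigma> b) (- unit_root m) 0"
    unfolding \<sigma>_def
    by (rule pseudo_refl_acts_on_plane_fst[where K = "coupling M m", OF \<open>finite S\<close> assms(2-4) K(1)])
  show "acts_on_plane b c (\<sigma> c) (- unit_root m) (1 + unit_root m)"
    using pseudo_refl_acts_on_plane_snd[where K = "coupling M m", OF \<open>finite S\<close> assms(2-4) K(2)]
    by (simp add: \<sigma>_def)
qed

theorem lemma3p4:
  fixes S :: "'a set" and M :: "'a \<Rightarrow> 'a \<Rightarrow> enat" and a b c :: 'a
  assumes "coxeter_matrix S M"
    and "parabolic_retractable S M"
    and "a \<in> S" "b \<in> S" "c \<in> S"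
    and "a \<noteq> b" "a \<noteq> c" "b \<noteq> c"
    and "odd_entry (M a b)" "odd_entry (M a c)" "odd_entry (M b c)"
  shows "the_enat (M b c) dvd the_enat (M a b) \<or> the_enat (M b c) dvd the_enat (M a c)"
proof -
  obtain p q m where p: "M a b = enat p" "odd p" and q: "M a c = enat q" "odd q"
    and m: "M b c = enat m" "odd m"
    using assms(9-11) by (auto simp: odd_entry_def)
  have "2 \<le> M b c"
    using assms(1,4,5,8) by (simp add: coxeter_matrix_def)
  with m have "3 \<le> m"
    by (simp add: numeral_eq_enat) presburger
  define \<sigma> where "\<sigma> = pseudo_refl S (coupling M m) (- unit_root m)"
  have braids: "satisfies_braids S M (BijGroup UNIV) \<sigma>"
    unfolding \<sigma>_def by (rule pseudo_refl_satisfies_braids[OF assms(1) \<open>3 \<le> m\<close>])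
  have bij: "\<And>s. bij (\<sigma> s)"
    by (simp add: \<sigma>_def bij_pseudo_refl)
  note \<sigma>_plane = pseudo_refl_acts_on_plane_pair[OF assms(1,4,5,8) m, folded \<sigma>_def]
  obtain \<phi> where ret: "is_retraction (artin_group S M) (parabolic S M {b, c}) \<phi>"
    using assms(2,4,5) unfolding parabolic_retractable_def by (meson empty_subsetI insert_subsetI)
  define T where "T = artin_lift (BijGroup UNIV) \<sigma> (\<phi> (artin_gen S M a))"
  have "\<exists>\<mu> t. \<mu> \<noteq> 0 \<and> acts_on_plane b c T \<mu> t"
    unfolding T_def
  proof (rule retraction_image_acts_on_plane[OF braids bij ret _ assms(3)])
    show "\<exists>m t. m \<noteq> 0 \<and> acts_on_plane b c (\<sigma> s) m t" if "s \<in> {b, c}" for s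
      using that \<sigma>_plane unit_root_nonzero[of m] neg_equal_0_iff_equal by blast
  qed (use assms(4,5) in simp)
  then obtain \<mu> t where "\<mu> \<noteq> 0" and T: "acts_on_plane b c T \<mu> t"
    by blast
  have braid: "alt_comp T (\<sigma> s) n = alt_comp (\<sigma> s) T n"
    if "s \<in> {b, c}" "a \<noteq> s" "M a s = enat n" for s n
    unfolding T_def using lift_retraction_braid[OF braids bij ret _ assms(3) that] assms(4,5) by blast
  have sum: "(\<Sum>i<n. (- (- unit_root m)) ^ i) \<noteq> 0" if "\<not> m dvd n" for n
    using unit_root_geometric_sum_nonzero[OF _ that] \<open>3 \<le> m\<close> by simp
  have "t = 0" if "\<not> m dvd p"
    using acts_on_plane_braid_translation[OF assms(8) T \<sigma>_plane(1) braid[OF _ assms(6) p(1)] p(2)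
        \<open>\<mu> \<noteq> 0\<close> _ sum[OF that]]
    by simp
  moreover have "t = 1 + unit_root m" if "\<not> m dvd q"
    using acts_on_plane_braid_translation[OF assms(8) T \<sigma>_plane(2) braid[OF _ assms(7) q(1)] q(2)
        \<open>\<mu> \<noteq> 0\<close> _ sum[OF that]]
    by simp
  moreover have "1 + unit_root m \<noteq> 0"
    using unit_root_ne_minus_1[OF \<open>3 \<le> m\<close>] by (metis add.commute eq_neg_iff_add_eq_0)
  ultimately have "m dvd p \<or> m dvd q"
    by force
  then show ?thesis
    using p q m by simp
qed

end
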